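(* Almost surely, $$\lim_{n\to\infty}\frac{Z_n-\mathbb{E}[Z_n]}{n}=0,\qquad \lim_{n\to\infty}\frac{\mathbb{E}[Z_n]}{n}=\frac{\tau}{1-\gamma},$$ so that $\frac{Z_n}{n}\to\frac{\tau}{1-\gamma}$ almost surely.
   Context: Fix $p,q,r\ge 0$ with $p+q+r=1$ and $\theta\in[0,1)$. Let $(X_n)_{n\ge1}$ be random variables with values in $\{-1,0,+1\}$ such that $\mathbb{P}(X_1=+1)=p$, $\mathbb{P}(X_1=-1)=q$, $\mathbb{P}(X_1=0)=r$. Let $\mathcal F_n=\sigma(X_1,\dots,X_n)$. For $n\ge1$ let $n_+,n_-,n_0$ denote the number of indices $i\in\{1,\dots,n\}$ with $X_i=+1$, $X_i=-1$, $X_i=0$ respectively. The conditional law of $X_{n+1}$ is $\mathbb{P}(X_{n+1}=+1\mid\mathcal F_n)=\theta\big(\tfrac{n_+}{n}p+\tfrac{n_-}{n}q\big)+(1-\theta)p$, $\mathbb{P}(X_{n+1}=-1\mid\mathcal F_n)=\theta\big(\tfrac{n_-}{n}p+\tfrac{n_+}{n}q\big)+(1-\theta)q$, $\mathbb{P}(X_{n+1}=0\mid\mathcal F_n)=\theta(p+q)\tfrac{n_0}{n}+r$. Let $Z_n=\sum_{i=1}^n X_i^2$. Notation: $\tau=(1-\theta)(p+q)$, $\gamma=(p+q)\theta$. *)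

theory Defs
  imports "HOL-Probability.Probability"
begin

definition nat_filtration :: "'a measure \<Rightarrow> (nat \<Rightarrow> 'a \<Rightarrow> int) \<Rightarrow> nat \<Rightarrow> 'a measure" where
  "nat_filtration M X n =
     sigma (space M) {X i -` A \<inter> space M | i A. i \<in> {1..n}}"

definition cnt :: "(nat \<Rightarrow> 'a \<Rightarrow> int) \<Rightarrow> int \<Rightarrow> nat \<Rightarrow> 'a \<Rightarrow> nat" where
  "cnt X v n \<omega> = card {i \<in> {1..n}. X i \<omega> = v}"

definition Zsum :: "(nat \<Rightarrow> 'a \<Rightarrow> int) \<Rightarrow> nat \<Rightarrow> 'a \<Rightarrow> real" where
  "Zsum X n \<omega> = (\<Sum>i=1..n. (real_of_int (X i \<omega>))\<^sup>2)"

end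

theory Submission
  imports Defs
begin

text \<open>The ratio z n = Z n / n obeys the stochastic-approximation recursion
  z (n+1) - L = (1 - (1 - \<gamma>) / (n + 1)) (z n - L) + \<epsilon> (n+1) / (n + 1), with L = \<tau> / (1 - \<gamma>),
  where the innovations \<epsilon> k = X k^2 - E[X k^2 | F (k-1)] are bounded martingale differences.
  A fourth-moment bound on their partial sums and Borel-Cantelli give that these sums are
  O(n^(7/8)) almost surely, so by Abel summation \<Sum> \<epsilon> k / k converges; a deterministic lemma
  then forces z n \<rightarrow> L. Dominated convergence transfers the limit to E[Z n] / n.\<close>

lemma contraction_tendsto_zero:
  fixes u :: "nat \<Rightarrow> real" and c :: real
  assumes c: "0 < c" and nonneg: "\<And>n. 0 \<le> u n"
    and contr: "\<And>n. n \<ge> N \<Longrightarrow> u (Suc n) \<le> (1 - c / (real n + 1)) * u n"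
  shows "u \<longlonglongrightarrow> 0"
proof -
  have harm_bound: "u n \<le> u N * exp (- c * (harm n - harm N))" if "n \<ge> N" for n
    using that
  proof (induction n rule: dec_induct)
    case (step n)
    have "1 - c / (real n + 1) \<le> exp (- (c / (real n + 1)))"
      using exp_ge_add_one_self[of "- (c / (real n + 1))"] by simp
    then have "u (Suc n) \<le> exp (- (c / (real n + 1))) * u n"
      using contr[OF step(1)] nonneg[of n] by (meson mult_right_mono order.trans)
    also have "\<dots> \<le> exp (- (c / (real n + 1))) * (u N * exp (- c * (harm n - harm N)))"
      using step(3) by (intro mult_left_mono) auto
    also have "\<dots> = u N * exp (- c * (harm (Suc n) - harm N))"
      by (simp add: harm_Suc algebra_simps divide_inverse flip: exp_add)
    finally show ?case .
  qed simp
  define K where "K = u N * exp (c * harm N)"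
  have power_bound: "u n \<le> K * (real n + 1) powr (- c)" if "n \<ge> N" for n
  proof -
    have "u n \<le> K * exp (- c * harm n)"
      using harm_bound[OF that] by (simp add: K_def exp_diff exp_minus right_diff_distrib divide_inverse)
    also have "\<dots> \<le> K * exp (- c * ln (real n + 1))"
      using ln_le_harm[of n] c nonneg[of N] by (intro mult_left_mono) (auto simp: K_def)
    finally show ?thesis by (simp add: powr_def)
  qed
  show ?thesis
  proof (rule Lim_null_comparison)
    show "\<forall>\<^sub>F n in sequentially. norm (u n) \<le> K * (real n + 1) powr (- c)"
      using power_bound nonneg by (auto simp: eventually_sequentially)
    have "filterlim (\<lambda>n. real n + 1) at_top sequentially"
      using filterlim_tendsto_add_at_top[OF tendsto_const[of 1] filterlim_real_sequentially]
      by (simp add: add.commute)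
    then show "(\<lambda>n. K * (real n + 1) powr (- c)) \<longlonglongrightarrow> 0"
      using c by (intro tendsto_mult_right_zero tendsto_neg_powr) auto
  qed
qed

lemma averaging_recursion_tendsto_zero:
  fixes v T :: "nat \<Rightarrow> real" and c :: real
  assumes c: "0 < c" "c \<le> 1" and T: "T \<longlonglongrightarrow> 0"
    and rec: "\<And>n. n \<ge> N \<Longrightarrow> v (Suc n) = (1 - c / (real n + 1)) * v n + c / (real n + 1) * T n"
  shows "v \<longlonglongrightarrow> 0"
proof (rule LIMSEQ_I)
  fix e :: real assume "0 < e"
  then obtain N1 where N1: "\<And>n. n \<ge> N1 \<Longrightarrow> \<bar>T n\<bar> < e / 2"
    using tendstoD[OF T, of "e / 2"] by (auto simp: eventually_sequentially)
  define u where "u n = max (\<bar>v n\<bar> - e / 2) 0" for n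
  \<comment> \<open>Once the input T is below e/2, the excess of |v| over e/2 contracts.\<close>
  have "u \<longlonglongrightarrow> 0"
  proof (rule contraction_tendsto_zero[OF c(1), where N = "max N N1"])
    fix n assume n: "max N N1 \<le> n"
    define a where "a = c / (real n + 1)"
    have a: "0 \<le> a" "a \<le> 1" using c by (auto simp: a_def field_simps)
    have "\<bar>v (Suc n)\<bar> \<le> (1 - a) * \<bar>v n\<bar> + a * \<bar>T n\<bar>"
    proof -
      have "v (Suc n) = (1 - a) * v n + a * T n" using rec[of n] n by (simp add: a_def)
      then have "\<bar>v (Suc n)\<bar> \<le> \<bar>(1 - a) * v n\<bar> + \<bar>a * T n\<bar>" by simp
      then show ?thesis using a by (simp add: abs_mult)
    qed
    also have "\<dots> \<le> (1 - a) * \<bar>v n\<bar> + a * (e / 2)"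
      using N1[of n] n a by (intro add_left_mono mult_left_mono) auto
    finally have "\<bar>v (Suc n)\<bar> - e / 2 \<le> (1 - a) * (\<bar>v n\<bar> - e / 2)" by (simp add: field_simps)
    also have "\<dots> \<le> (1 - a) * u n" using a by (intro mult_left_mono) (auto simp: u_def)
    finally show "u (Suc n) \<le> (1 - c / (real n + 1)) * u n"
      using a by (auto simp: u_def a_def)
  qed (simp add: u_def)
  then obtain N2 where N2: "\<And>n. n \<ge> N2 \<Longrightarrow> \<bar>u n\<bar> < e / 2"
    using tendstoD[of u 0 sequentially "e / 2"] \<open>0 < e\<close> by (auto simp: eventually_sequentially)
  then have "\<bar>v n\<bar> < e" if "n \<ge> N2" for n
  proof -
    have "max (\<bar>v n\<bar> - e / 2) 0 < e / 2" using N2[OF that] by (simp add: u_def)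
    then show ?thesis unfolding max_less_iff_conj by linarith
  qed
  then show "\<exists>no. \<forall>n\<ge>no. norm (v n - 0) < e" by auto
qed

lemma perturbed_recursion_tendsto_zero:
  fixes w \<delta> :: "nat \<Rightarrow> real" and c P :: real
  assumes c: "0 < c" "c \<le> 1" and P: "(\<lambda>n. \<Sum>k=1..n. \<delta> k) \<longlonglongrightarrow> P"
    and rec: "\<And>n. n \<ge> N \<Longrightarrow> w (Suc n) = (1 - c / (real n + 1)) * w n + \<delta> (Suc n)"
  shows "w \<longlonglongrightarrow> 0"
proof -
  define T where "T n = P - (\<Sum>k=1..n. \<delta> k)" for n
  have T: "T \<longlonglongrightarrow> 0"
    unfolding T_def using tendsto_diff[OF tendsto_const[of P] P] by simp
  \<comment> \<open>Adding the tail T of the perturbation series turns it into a vanishing averaged input.\<close>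
  have "(\<lambda>n. w n + T n) \<longlonglongrightarrow> 0"
  proof (rule averaging_recursion_tendsto_zero[OF c T])
    fix n assume "n \<ge> N"
    then show "w (Suc n) + T (Suc n) = (1 - c / (real n + 1)) * (w n + T n) + c / (real n + 1) * T n"
      by (simp add: rec T_def algebra_simps add_divide_distrib)
  qed
  from tendsto_diff[OF this T] show ?thesis by simp
qed

lemma sum_div_by_parts:
  fixes e :: "nat \<Rightarrow> real"
  shows "(\<Sum>k=1..n. e k / real k) = (\<Sum>k=1..n. e k) / (real n + 1)
           + (\<Sum>k=1..n. (\<Sum>j=1..k. e j) / (real k * (real k + 1)))"
proof (induction n)
  case (Suc n)
  define A where "A = (\<Sum>k=1..n. e k) + e (Suc n)"
  have "real n + 1 > 0" "real n + 2 > 0" by auto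
  then have parts: "A / (real n + 2) + A / ((real n + 1) * (real n + 2)) = A / (real n + 1)"
    by (simp add: divide_simps) (simp add: algebra_simps)
  show ?case
    using Suc parts by (simp add: A_def add_divide_distrib algebra_simps)
qed simp

lemma convergent_sum_div_of_partial_sum_bound:
  fixes e :: "nat \<Rightarrow> real" and a :: real
  assumes a: "a < 1" and bound: "eventually (\<lambda>n. \<bar>\<Sum>k=1..n. e k\<bar> \<le> real n powr a) sequentially"
  shows "convergent (\<lambda>n. \<Sum>k=1..n. e k / real k)"
proof -
  define S where "S n = (\<Sum>k=1..n. e k)" for n
  from bound obtain N where N: "\<And>n. n \<ge> N \<Longrightarrow> \<bar>S n\<bar> \<le> real n powr a"
    by (auto simp: eventually_sequentially S_def)
  define f where "f k = S k / (real k * (real k + 1))" for k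
  have "summable f"
  proof (rule summable_comparison_test'[where N = "max N 1"])
    show "summable (\<lambda>n. real n powr (a - 2))" using a by (simp add: summable_real_powr_iff)
    fix n assume n: "n \<ge> max N 1"
    have "norm (f n) \<le> \<bar>S n\<bar> / (real n * real n)"
      using n by (auto simp: f_def abs_mult intro!: divide_left_mono mult_pos_pos)
    also have "\<dots> \<le> real n powr a / (real n * real n)"
      using N[of n] n by (intro divide_right_mono) auto
    also have "\<dots> = real n powr (a - 2)"
      using n by (simp add: powr_diff power2_eq_square)
    finally show "norm (f n) \<le> real n powr (a - 2)" .
  qed
  then have "(\<lambda>n. \<Sum>k=1..n. f k) \<longlonglongrightarrow> suminf f"
    using summable_LIMSEQ'[of f] by (simp add: f_def atMost_atLeast0 sum.atLeast_Suc_atMost)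
  moreover have "(\<lambda>n. S n / (real n + 1)) \<longlonglongrightarrow> 0"
  proof (rule Lim_null_comparison)
    show "(\<lambda>n. real n powr (a - 1)) \<longlonglongrightarrow> 0"
      using a by (intro tendsto_neg_powr filterlim_real_sequentially) auto
    have "norm (S n / (real n + 1)) \<le> real n powr (a - 1)" if n: "n \<ge> max N 1" for n
    proof -
      have "norm (S n / (real n + 1)) \<le> \<bar>S n\<bar> / real n"
        using n by (auto intro!: divide_left_mono)
      also have "\<dots> \<le> real n powr a / real n"
        using N[of n] n by (intro divide_right_mono) auto
      finally show ?thesis using n by (simp add: powr_diff)
    qed
    then show "\<forall>\<^sub>F n in sequentially. norm (S n / (real n + 1)) \<le> real n powr (a - 1)"
      unfolding eventually_sequentially by blast
  qed
  ultimately have "(\<lambda>n. S n / (real n + 1) + (\<Sum>k=1..n. f k)) \<longlonglongrightarrow> 0 + suminf f"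
    by (intro tendsto_add)
  then show ?thesis
    unfolding convergent_def sum_div_by_parts[of e] by (auto simp: S_def f_def)
qed

lemma power4_add_le:
  fixes s e :: real
  assumes "\<bar>e\<bar> \<le> 1"
  shows "(s + e) ^ 4 \<le> s ^ 4 + 4 * (s ^ 3 * e) + 8 * s ^ 2 + 3"
proof -
  have e2: "e ^ 2 \<le> 1" using assms by (simp add: abs_square_le_1)
  have e3: "\<bar>e ^ 3\<bar> \<le> 1" unfolding power_abs using assms by (intro power_le_one) auto
  have e4: "e ^ 4 \<le> 1" using power_le_one[of "\<bar>e\<bar>" 4] assms by simp
  have "(s + e) ^ 4 = s ^ 4 + 4 * (s ^ 3 * e) + 6 * s ^ 2 * e ^ 2 + 4 * s * e ^ 3 + e ^ 4"
    by algebra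
  also have "6 * s ^ 2 * e ^ 2 \<le> 6 * s ^ 2" using e2 by (simp add: mult_left_le)
  also have "4 * s * e ^ 3 \<le> 4 * \<bar>s\<bar>"
  proof -
    have "s * e ^ 3 \<le> \<bar>s\<bar> * \<bar>e ^ 3\<bar>" by (metis abs_ge_self abs_mult)
    also have "\<dots> \<le> \<bar>s\<bar>" using e3 by (simp add: mult_left_le)
    finally show ?thesis by simp
  qed
  also have "4 * \<bar>s\<bar> \<le> 2 * s ^ 2 + 2"
    using sum_squares_ge_zero[of "\<bar>s\<bar> - 1" 0] by (simp add: power2_eq_square algebra_simps)
  finally show ?thesis using e4 by simp
qed

locale bounded_orthogonal_increments = prob_space +
  fixes e :: "nat \<Rightarrow> 'a \<Rightarrow> real"
  assumes increment_measurable: "\<And>k. k \<ge> 1 \<Longrightarrow> e k \<in> borel_measurable M"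
    and increment_bounded: "\<And>k \<omega>. k \<ge> 1 \<Longrightarrow> \<omega> \<in> space M \<Longrightarrow> \<bar>e k \<omega>\<bar> \<le> 1"
    and increment_orthogonal:
      "\<And>n j. j \<ge> 1 \<Longrightarrow> (\<integral>\<omega>. (\<Sum>k=1..n. e k \<omega>) ^ j * e (Suc n) \<omega> \<partial>M) = 0"
begin

definition psum :: "nat \<Rightarrow> 'a \<Rightarrow> real" where
  "psum n \<omega> = (\<Sum>k=1..n. e k \<omega>)"

lemma psum_Suc: "psum (Suc n) \<omega> = psum n \<omega> + e (Suc n) \<omega>"
  by (simp add: psum_def)

lemma psum_measurable [measurable]: "psum n \<in> borel_measurable M"
  unfolding psum_def[abs_def] by (intro borel_measurable_sum increment_measurable) auto

lemma Suc_increment_measurable [measurable]: "e (Suc n) \<in> borel_measurable M"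
  by (rule increment_measurable) simp

lemma abs_psum_le:
  assumes "\<omega> \<in> space M"
  shows "\<bar>psum n \<omega>\<bar> \<le> real n"
proof -
  have "\<bar>psum n \<omega>\<bar> \<le> (\<Sum>k=1..n. \<bar>e k \<omega>\<bar>)" unfolding psum_def by (rule sum_abs)
  also have "\<dots> \<le> (\<Sum>k=1..n. 1)" using increment_bounded assms by (intro sum_mono) auto
  finally show ?thesis by simp
qed

lemma integrable_psum_power: "integrable M (\<lambda>\<omega>. psum n \<omega> ^ j)"
  by (rule integrable_const_bound[where B = "real n ^ j"])
    (auto simp: power_abs intro!: power_mono abs_psum_le)

lemma integrable_psum_power_increment: "integrable M (\<lambda>\<omega>. psum n \<omega> ^ j * e (Suc n) \<omega>)"
proof (rule integrable_const_bound[where B = "real n ^ j"])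
  show "AE \<omega> in M. norm (psum n \<omega> ^ j * e (Suc n) \<omega>) \<le> real n ^ j"
  proof (rule AE_I2)
    fix \<omega> assume "\<omega> \<in> space M"
    then have "\<bar>psum n \<omega>\<bar> ^ j * \<bar>e (Suc n) \<omega>\<bar> \<le> real n ^ j * 1"
      using increment_bounded[of "Suc n"] by (intro mult_mono power_mono abs_psum_le) auto
    then show "norm (psum n \<omega> ^ j * e (Suc n) \<omega>) \<le> real n ^ j" by (simp add: abs_mult power_abs)
  qed
qed simp

lemma psum_moment2_le: "(\<integral>\<omega>. psum n \<omega> ^ 2 \<partial>M) \<le> real n"
proof (induction n)
  case (Suc n)
  have "(\<integral>\<omega>. psum (Suc n) \<omega> ^ 2 \<partial>M)
      \<le> (\<integral>\<omega>. psum n \<omega> ^ 2 + 2 * (psum n \<omega> ^ 1 * e (Suc n) \<omega>) + 1 \<partial>M)"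
  proof (rule integral_mono)
    fix \<omega> assume "\<omega> \<in> space M"
    then have "(e (Suc n) \<omega>)\<^sup>2 \<le> 1"
      using increment_bounded[of "Suc n" \<omega>] by (simp add: abs_square_le_1)
    then show "psum (Suc n) \<omega> ^ 2 \<le> psum n \<omega> ^ 2 + 2 * (psum n \<omega> ^ 1 * e (Suc n) \<omega>) + 1"
      unfolding psum_Suc by (simp add: power2_sum)
  qed (intro Bochner_Integration.integrable_add integrable_mult_right integrable_const
      integrable_psum_power integrable_psum_power_increment)+
  also have "\<dots> = (\<integral>\<omega>. psum n \<omega> ^ 2 \<partial>M) + 2 * (\<integral>\<omega>. psum n \<omega> ^ 1 * e (Suc n) \<omega> \<partial>M) + 1"
    using integrable_psum_power[of n 2] integrable_psum_power_increment[of n 1]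
    by (simp add: prob_space)
  also have "\<dots> \<le> real (Suc n)"
    using Suc increment_orthogonal[of 1 n] by (simp add: psum_def)
  finally show ?case .
qed (simp add: psum_def)

lemma psum_moment4_le: "(\<integral>\<omega>. psum n \<omega> ^ 4 \<partial>M) \<le> 8 * real n ^ 2"
proof (induction n)
  case (Suc n)
  have "(\<integral>\<omega>. psum (Suc n) \<omega> ^ 4 \<partial>M)
      \<le> (\<integral>\<omega>. psum n \<omega> ^ 4 + 4 * (psum n \<omega> ^ 3 * e (Suc n) \<omega>) + 8 * psum n \<omega> ^ 2 + 3 \<partial>M)"
  proof (rule integral_mono)
    fix \<omega> assume "\<omega> \<in> space M"
    then show "psum (Suc n) \<omega> ^ 4
        \<le> psum n \<omega> ^ 4 + 4 * (psum n \<omega> ^ 3 * e (Suc n) \<omega>) + 8 * psum n \<omega> ^ 2 + 3"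
      unfolding psum_Suc using increment_bounded[of "Suc n" \<omega>] by (intro power4_add_le) auto
  qed (intro Bochner_Integration.integrable_add integrable_mult_right integrable_const
      integrable_psum_power integrable_psum_power_increment)+
  also have "\<dots> = (\<integral>\<omega>. psum n \<omega> ^ 4 \<partial>M) + 4 * (\<integral>\<omega>. psum n \<omega> ^ 3 * e (Suc n) \<omega> \<partial>M)
      + 8 * (\<integral>\<omega>. psum n \<omega> ^ 2 \<partial>M) + 3"
    using integrable_psum_power[of n 2] integrable_psum_power[of n 4]
      integrable_psum_power_increment[of n 3]
    by (simp add: prob_space)
  also have "\<dots> \<le> 8 * real n ^ 2 + 8 * real n + 3"
    using Suc increment_orthogonal[of 3 n] psum_moment2_le[of n] by (simp add: psum_def)
  also have "\<dots> \<le> 8 * real (Suc n) ^ 2"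
    by (simp add: power2_eq_square algebra_simps)
  finally show ?case .
qed (simp add: psum_def)

text \<open>Any exponent a in (3/4, 1) would do here: by the fourth-moment bound and Markov's
  inequality, P(|psum n| \<ge> n^a) = O(n^(2 - 4a)) is summable.\<close>

lemma AE_eventually_abs_psum_le: "AE \<omega> in M. eventually (\<lambda>n. \<bar>psum n \<omega>\<bar> \<le> real n powr (7/8)) sequentially"
proof -
  define A where "A n = {\<omega> \<in> space M. real n powr (7/2) \<le> psum n \<omega> ^ 4}" for n
  have [measurable]: "A n \<in> sets M" for n unfolding A_def by measurable
  have "summable (\<lambda>n. measure M (A n))"
  proof (rule summable_comparison_test'[where N = 1])
    show "summable (\<lambda>n. 8 * real n powr (- 3/2))"
      by (intro summable_mult) (simp add: summable_real_powr_iff)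
    fix n :: nat assume "n \<ge> 1"
    then have n: "real n > 0" by simp
    have "measure M (A n) \<le> (\<integral>\<omega>. psum n \<omega> ^ 4 \<partial>M) / real n powr (7/2)"
      unfolding A_def using n
      by (intro integral_Markov_inequality_measure[OF integrable_psum_power sets.top]) auto
    also have "\<dots> \<le> 8 * real n ^ 2 / real n powr (7/2)"
      using n by (intro divide_right_mono psum_moment4_le) auto
    also have "\<dots> = 8 * real n powr (- 3/2)"
    proof -
      have "real n ^ 2 = real n powr 2" using n by (simp add: powr_numeral)
      also have "\<dots> / real n powr (7/2) = real n powr (2 - 7/2)" by (rule powr_diff[symmetric])
      finally have "real n ^ 2 / real n powr (7/2) = real n powr (- 3/2)" by simp
      then show ?thesis by (metis times_divide_eq_right)
    qed
    finally show "norm (measure M (A n)) \<le> 8 * real n powr (- 3/2)" by simp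
  qed
  then have "AE \<omega> in M. eventually (\<lambda>n. \<omega> \<in> space M - A n) sequentially"
    by (intro borel_cantelli_AE1) (auto simp: emeasure_eq_measure)
  then show ?thesis
  proof (rule AE_mp, intro AE_I2 impI)
    fix \<omega> assume "eventually (\<lambda>n. \<omega> \<in> space M - A n) sequentially"
    then have "eventually (\<lambda>n. \<omega> \<in> space M - A n \<and> n \<ge> 1) sequentially"
      by (intro eventually_conj eventually_ge_at_top)
    then show "eventually (\<lambda>n. \<bar>psum n \<omega>\<bar> \<le> real n powr (7/8)) sequentially"
    proof (rule eventually_mono, elim conjE)
      fix n :: nat assume "\<omega> \<in> space M - A n" "n \<ge> 1"
      then have "\<bar>psum n \<omega>\<bar> ^ 4 < real n powr (7/2)" by (auto simp: A_def)
      also have "real n powr (7/2) = (real n powr (7/8)) ^ 4"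
        using \<open>n \<ge> 1\<close> by (subst powr_power) auto
      finally show "\<bar>psum n \<omega>\<bar> \<le> real n powr (7/8)"
        using power_less_imp_less_base by fastforce
    qed
  qed
qed

lemma AE_convergent_sum_div: "AE \<omega> in M. convergent (\<lambda>n. \<Sum>k=1..n. e k \<omega> / real k)"
  using AE_eventually_abs_psum_le
  by eventually_elim (rule convergent_sum_div_of_partial_sum_bound[of "7/8"], auto simp: psum_def)

end

lemma space_nat_filtration [simp]: "space (nat_filtration M X n) = space M"
  unfolding nat_filtration_def by (rule space_measure_of) auto

lemma sets_nat_filtration:
  "sets (nat_filtration M X n) = sigma_sets (space M) {X i -` A \<inter> space M | i A. i \<in> {1..n}}"
  unfolding nat_filtration_def by (rule sets_measure_of) auto

lemma subalgebra_nat_filtration: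
  assumes "\<And>i. i \<ge> 1 \<Longrightarrow> X i \<in> M \<rightarrow>\<^sub>M count_space UNIV"
  shows "subalgebra M (nat_filtration M X n)"
  unfolding subalgebra_def sets_nat_filtration
  using assms by (auto intro!: sets.sigma_sets_subset measurable_sets)

lemma measurable_nat_filtration:
  assumes "1 \<le> i" "i \<le> n"
  shows "X i \<in> nat_filtration M X n \<rightarrow>\<^sub>M count_space UNIV"
proof (rule measurableI)
  fix A
  have "X i -` A \<inter> space M \<in> {X i -` A \<inter> space M | i A. i \<in> {1..n}}" using assms by auto
  then show "X i -` A \<inter> space (nat_filtration M X n) \<in> sets (nat_filtration M X n)"
    unfolding sets_nat_filtration by auto
qed simp

locale elephant_walk = prob_space M for M :: "'a measure" +
  fixes X :: "nat \<Rightarrow> 'a \<Rightarrow> int" and p q r \<theta> :: real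
  assumes p: "p \<ge> 0" and q: "q \<ge> 0" and r: "r \<ge> 0" and pqr: "p + q + r = 1"
    and \<theta>: "0 \<le> \<theta>" "\<theta> < 1"
    and meas: "\<And>i. i \<ge> 1 \<Longrightarrow> X i \<in> M \<rightarrow>\<^sub>M count_space UNIV"
    and vals: "\<And>i \<omega>. i \<ge> 1 \<Longrightarrow> \<omega> \<in> space M \<Longrightarrow> X i \<omega> \<in> {-1, 0, 1}"
    and step_zero: "\<And>n. n \<ge> 1 \<Longrightarrow> AE \<omega> in M.
        real_cond_exp M (nat_filtration M X n)
          (indicator {\<omega> \<in> space M. X (n + 1) \<omega> = 0}) \<omega>
        = \<theta> * (p + q) * (real (cnt X 0 n \<omega>) / real n) + r"
begin

abbreviation F :: "nat \<Rightarrow> 'a measure" where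
  "F \<equiv> nat_filtration M X"

definition \<gamma> :: real where "\<gamma> = (p + q) * \<theta>"
definition \<tau> :: real where "\<tau> = (1 - \<theta>) * (p + q)"

definition moved :: "nat \<Rightarrow> 'a \<Rightarrow> real" where
  "moved k \<omega> = (real_of_int (X k \<omega>))\<^sup>2"

text \<open>drift n is the conditional probability, given F n, that step n + 1 moves. At n = 0 it
  is \<tau> (as x / 0 = 0), so the first innovation is not centred; only the later ones need to be.\<close>

definition drift :: "nat \<Rightarrow> 'a \<Rightarrow> real" where
  "drift n \<omega> = \<gamma> * Zsum X n \<omega> / real n + \<tau>"

definition innov :: "nat \<Rightarrow> 'a \<Rightarrow> real" where
  "innov k \<omega> = moved k \<omega> - drift (k - 1) \<omega>"

lemma \<gamma>_nonneg: "0 \<le> \<gamma>" and \<gamma>_less_1: "\<gamma> < 1"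
  and \<tau>_nonneg: "0 \<le> \<tau>" and \<gamma>_plus_\<tau>: "\<gamma> + \<tau> = 1 - r"
proof -
  show "0 \<le> \<gamma>" "0 \<le> \<tau>" using p q \<theta> by (auto simp: \<gamma>_def \<tau>_def)
  show "\<gamma> + \<tau> = 1 - r" using pqr by (simp add: \<gamma>_def \<tau>_def algebra_simps)
  have "(p + q) * \<theta> \<le> 1 * \<theta>" using pqr r \<theta> by (intro mult_right_mono) auto
  then show "\<gamma> < 1" using \<theta> by (simp add: \<gamma>_def)
qed

lemma moved_eq: "1 \<le> k \<Longrightarrow> \<omega> \<in> space M \<Longrightarrow> moved k \<omega> = (if X k \<omega> = 0 then 0 else 1)"
  using vals[of k \<omega>] by (auto simp: moved_def)

lemma Zsum_bounds:
  assumes "\<omega> \<in> space M"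
  shows "0 \<le> Zsum X n \<omega>" "Zsum X n \<omega> \<le> real n"
proof -
  show "0 \<le> Zsum X n \<omega>" by (simp add: Zsum_def sum_nonneg)
  have "Zsum X n \<omega> = (\<Sum>i=1..n. moved i \<omega>)" by (simp add: Zsum_def moved_def)
  also have "\<dots> \<le> (\<Sum>i=1..n. 1)" using moved_eq assms by (intro sum_mono) auto
  finally show "Zsum X n \<omega> \<le> real n" by simp
qed

lemma drift_bounds:
  assumes "\<omega> \<in> space M"
  shows "0 \<le> drift n \<omega>" "drift n \<omega> \<le> 1"
proof -
  have z: "0 \<le> Zsum X n \<omega> / real n" "Zsum X n \<omega> / real n \<le> 1"
    using Zsum_bounds[OF assms, of n] by (auto simp: divide_simps)
  have "drift n \<omega> = \<gamma> * (Zsum X n \<omega> / real n) + \<tau>" by (simp add: drift_def)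
  moreover have "\<gamma> * (Zsum X n \<omega> / real n) \<le> \<gamma>"
    by (rule mult_left_le[OF z(2) \<gamma>_nonneg])
  moreover have "0 \<le> \<gamma> * (Zsum X n \<omega> / real n)"
    by (rule mult_nonneg_nonneg[OF \<gamma>_nonneg z(1)])
  ultimately show "0 \<le> drift n \<omega>" "drift n \<omega> \<le> 1"
    using z \<gamma>_nonneg \<tau>_nonneg \<gamma>_plus_\<tau> r by auto
qed

lemma abs_innov_le: "1 \<le> k \<Longrightarrow> \<omega> \<in> space M \<Longrightarrow> \<bar>innov k \<omega>\<bar> \<le> 1"
  using drift_bounds[of \<omega> "k - 1"] moved_eq[of k \<omega>] by (auto simp: innov_def)

lemma real_cnt_zero: "\<omega> \<in> space M \<Longrightarrow> real (cnt X 0 n \<omega>) = real n - Zsum X n \<omega>"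
proof -
  assume \<omega>: "\<omega> \<in> space M"
  have "real (cnt X 0 n \<omega>) = (\<Sum>i=1..n. if X i \<omega> = 0 then 1 else 0)"
    unfolding cnt_def real_of_card by (rule sum.inter_filter) simp
  also have "\<dots> = (\<Sum>i=1..n. 1 - moved i \<omega>)" using moved_eq \<omega> by (intro sum.cong) auto
  finally show ?thesis by (simp add: sum_subtractf Zsum_def moved_def)
qed

lemma subalgebra_F: "subalgebra M (F n)"
  using meas by (rule subalgebra_nat_filtration)

lemma Zsum_measurable_F: "k \<le> n \<Longrightarrow> Zsum X k \<in> borel_measurable (F n)"
  unfolding Zsum_def[abs_def]
  by (intro borel_measurable_sum measurable_compose[OF measurable_nat_filtration]) auto

lemma moved_measurable_F: "1 \<le> k \<Longrightarrow> k \<le> n \<Longrightarrow> moved k \<in> borel_measurable (F n)"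
  unfolding moved_def[abs_def]
  by (rule measurable_compose[OF measurable_nat_filtration]) auto

lemma innov_measurable_F: "1 \<le> k \<Longrightarrow> k \<le> n \<Longrightarrow> innov k \<in> borel_measurable (F n)"
  unfolding innov_def[abs_def] drift_def[abs_def]
  by (intro borel_measurable_diff borel_measurable_add borel_measurable_divide
      borel_measurable_times borel_measurable_const moved_measurable_F Zsum_measurable_F) auto

lemma measurable_from_F: "f \<in> borel_measurable (F n) \<Longrightarrow> f \<in> borel_measurable M"
  by (rule measurable_from_subalg[OF subalgebra_F])

lemma Zsum_measurable [measurable]: "Zsum X n \<in> borel_measurable M"
  by (rule measurable_from_F[OF Zsum_measurable_F[OF order.refl]])

lemma cond_exp_moved:
  assumes "n \<ge> 1"
  shows "AE \<omega> in M. real_cond_exp M (F n) (indicator {\<omega> \<in> space M. X (n + 1) \<omega> = 0}) \<omega>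
    = 1 - drift n \<omega>"
  using step_zero[OF assms] AE_space
proof eventually_elim
  case (elim \<omega>)
  have "\<theta> * (p + q) * (real (cnt X 0 n \<omega>) / real n) + r = \<gamma> * ((real n - Zsum X n \<omega>) / real n) + r"
    using real_cnt_zero[OF elim(2)] by (simp add: \<gamma>_def mult_ac)
  also have "\<dots> = 1 - drift n \<omega>"
  proof -
    have r_eq: "r = 1 - \<gamma> - \<tau>" using \<gamma>_plus_\<tau> by simp
    show ?thesis unfolding r_eq using assms by (simp add: drift_def field_simps)
  qed
  finally show ?case using elim(1) by simp
qed

lemma integral_mult_innov_eq_0:
  assumes n: "n \<ge> 1" and h: "h \<in> borel_measurable (F n)"
    and h_bounded: "\<And>\<omega>. \<omega> \<in> space M \<Longrightarrow> \<bar>h \<omega>\<bar> \<le> B"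
  shows "(\<integral>\<omega>. h \<omega> * innov (n + 1) \<omega> \<partial>M) = 0"
proof -
  interpret finite_measure_subalgebra M "F n" by unfold_locales (rule subalgebra_F)
  define I :: "'a \<Rightarrow> real" where "I = indicator {\<omega> \<in> space M. X (n + 1) \<omega> = 0}"
  have [measurable]: "h \<in> borel_measurable M" using h by (rule measurable_from_F)
  have [measurable]: "X (n + 1) \<in> M \<rightarrow>\<^sub>M count_space UNIV" using meas by simp
  have I_measurable [measurable]: "I \<in> borel_measurable M" unfolding I_def by measurable
  have integrable_h_mult: "integrable M (\<lambda>\<omega>. h \<omega> * g \<omega>)"
    if [measurable]: "g \<in> borel_measurable M" and g: "\<And>\<omega>. \<omega> \<in> space M \<Longrightarrow> \<bar>g \<omega>\<bar> \<le> 1" for g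
  proof (rule integrable_const_bound[where B = B])
    have "\<bar>h \<omega>\<bar> * \<bar>g \<omega>\<bar> \<le> B * 1" if "\<omega> \<in> space M" for \<omega>
      using h_bounded[OF that] g[OF that] by (intro mult_mono) auto
    then show "AE \<omega> in M. norm (h \<omega> * g \<omega>) \<le> B" by (auto simp: abs_mult)
  qed measurable
  have [measurable]: "drift n \<in> borel_measurable M" unfolding drift_def[abs_def] by measurable
  have int_drift: "integrable M (\<lambda>\<omega>. h \<omega> * (1 - drift n \<omega>))"
    using drift_bounds by (intro integrable_h_mult) (auto simp: abs_le_iff)
  have int_I: "integrable M (\<lambda>\<omega>. h \<omega> * I \<omega>)"
    by (intro integrable_h_mult I_measurable) (auto simp: I_def indicator_def)
  have "(\<integral>\<omega>. h \<omega> * I \<omega> \<partial>M) = (\<integral>\<omega>. h \<omega> * real_cond_exp M (F n) I \<omega> \<partial>M)"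
    by (rule real_cond_exp_intg(2)[symmetric, OF int_I h I_measurable])
  also have "\<dots> = (\<integral>\<omega>. h \<omega> * (1 - drift n \<omega>) \<partial>M)"
    using cond_exp_moved[OF n] by (intro integral_cong_AE) (auto simp: I_def elim: AE_mp)
  finally have cond: "(\<integral>\<omega>. h \<omega> * I \<omega> \<partial>M) = (\<integral>\<omega>. h \<omega> * (1 - drift n \<omega>) \<partial>M)" .
  have "innov (n + 1) \<omega> = (1 - drift n \<omega>) - I \<omega>" if "\<omega> \<in> space M" for \<omega>
    using moved_eq[of "n + 1" \<omega>] that by (simp add: innov_def I_def)
  then have "(\<integral>\<omega>. h \<omega> * innov (n + 1) \<omega> \<partial>M) = (\<integral>\<omega>. h \<omega> * (1 - drift n \<omega>) - h \<omega> * I \<omega> \<partial>M)"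
    by (intro Bochner_Integration.integral_cong) (auto simp: right_diff_distrib)
  then show ?thesis using cond int_drift int_I by simp
qed

sublocale innovations: bounded_orthogonal_increments M innov
proof
  show "innov k \<in> borel_measurable M" if "k \<ge> 1" for k
    using that by (intro measurable_from_F[OF innov_measurable_F]) auto
  show "\<bar>innov k \<omega>\<bar> \<le> 1" if "k \<ge> 1" "\<omega> \<in> space M" for k \<omega>
    using that by (rule abs_innov_le)
  show "(\<integral>\<omega>. (\<Sum>k=1..n. innov k \<omega>) ^ j * innov (Suc n) \<omega> \<partial>M) = 0" if "j \<ge> 1" for n j
  proof (cases "n = 0")
    case False
    have "(\<integral>\<omega>. (\<Sum>k=1..n. innov k \<omega>) ^ j * innov (n + 1) \<omega> \<partial>M) = 0"
    proof (rule integral_mult_innov_eq_0[where B = "real n ^ j"])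
      show "(\<lambda>\<omega>. (\<Sum>k=1..n. innov k \<omega>) ^ j) \<in> borel_measurable (F n)"
        by (intro borel_measurable_power borel_measurable_sum innov_measurable_F) auto
      fix \<omega> assume "\<omega> \<in> space M"
      then have "\<bar>\<Sum>k=1..n. innov k \<omega>\<bar> \<le> (\<Sum>k=1..n. 1)"
        using abs_innov_le by (intro order.trans[OF sum_abs] sum_mono) auto
      then show "\<bar>(\<Sum>k=1..n. innov k \<omega>) ^ j\<bar> \<le> real n ^ j"
        unfolding power_abs by (intro power_mono) auto
    qed (use False in simp)
    then show ?thesis by simp
  qed (use that in simp)
qed

definition zlim :: real where "zlim = \<tau> / (1 - \<gamma>)"

lemma Zsum_ratio_recursion:
  assumes n: "n \<ge> 1"
  shows "Zsum X (Suc n) \<omega> / real (Suc n) - zlim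
    = (1 - (1 - \<gamma>) / (real n + 1)) * (Zsum X n \<omega> / real n - zlim) + innov (Suc n) \<omega> / real (Suc n)"
proof -
  have Zsum_Suc: "Zsum X (Suc n) \<omega> = Zsum X n \<omega> + innov (Suc n) \<omega> + \<gamma> * Zsum X n \<omega> / real n + \<tau>"
    by (simp add: Zsum_def innov_def moved_def drift_def)
  have "1 - \<gamma> \<noteq> 0" using \<gamma>_less_1 by simp
  then have \<tau>_eq: "\<tau> = (1 - \<gamma>) * zlim" by (simp add: zlim_def)
  have "real n > 0" using n by simp
  then show ?thesis unfolding Zsum_Suc \<tau>_eq by (simp add: divide_simps) (simp add: algebra_simps)
qed

lemma AE_Zsum_ratio_tendsto: "AE \<omega> in M. (\<lambda>n. Zsum X n \<omega> / real n) \<longlonglongrightarrow> zlim"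
  using innovations.AE_convergent_sum_div
proof eventually_elim
  case (elim \<omega>)
  then obtain P where P: "(\<lambda>n. \<Sum>k=1..n. innov k \<omega> / real k) \<longlonglongrightarrow> P"
    by (auto simp: convergent_def)
  have "(\<lambda>n. Zsum X n \<omega> / real n - zlim) \<longlonglongrightarrow> 0"
    using \<gamma>_nonneg \<gamma>_less_1
    by (intro perturbed_recursion_tendsto_zero[OF _ _ P, where c = "1 - \<gamma>" and N = 1]
        Zsum_ratio_recursion) auto
  then show ?case by (simp add: LIM_zero_iff)
qed

lemma expectation_Zsum_ratio_tendsto: "(\<lambda>n. expectation (Zsum X n) / real n) \<longlonglongrightarrow> zlim"
proof -
  have "(\<lambda>n. \<integral>\<omega>. Zsum X n \<omega> / real n \<partial>M) \<longlonglongrightarrow> (\<integral>\<omega>. zlim \<partial>M)"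
  proof (rule integral_dominated_convergence[where w = "\<lambda>_. 1"])
    show "AE \<omega> in M. norm (Zsum X n \<omega> / real n) \<le> 1" for n
      using Zsum_bounds by (auto intro!: AE_I2 simp: divide_simps)
  qed (auto intro: AE_Zsum_ratio_tendsto)
  then show ?thesis by (simp add: prob_space)
qed

end

theorem mainTheorem11:
  fixes M :: "'a measure" and X :: "nat \<Rightarrow> 'a \<Rightarrow> int"
    and p q r \<theta> :: real
  assumes "prob_space M"
    and "p \<ge> 0" "q \<ge> 0" "r \<ge> 0" "p + q + r = 1"
    and "0 \<le> \<theta>" "\<theta> < 1"
    and meas: "\<And>i. i \<ge> 1 \<Longrightarrow> X i \<in> M \<rightarrow>\<^sub>M count_space UNIV"
    and vals: "\<And>i \<omega>. i \<ge> 1 \<Longrightarrow> \<omega> \<in> space M \<Longrightarrow> X i \<omega> \<in> {-1, 0, 1}"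
    and init: "measure M {\<omega> \<in> space M. X 1 \<omega> = 1} = p"
              "measure M {\<omega> \<in> space M. X 1 \<omega> = -1} = q"
              "measure M {\<omega> \<in> space M. X 1 \<omega> = 0} = r"
    and step_plus: "\<And>n. n \<ge> 1 \<Longrightarrow> AE \<omega> in M.
        real_cond_exp M (nat_filtration M X n)
          (indicator {\<omega> \<in> space M. X (n + 1) \<omega> = 1}) \<omega>
        = \<theta> * (real (cnt X 1 n \<omega>) / real n * p + real (cnt X (-1) n \<omega>) / real n * q)
          + (1 - \<theta>) * p"
    and step_minus: "\<And>n. n \<ge> 1 \<Longrightarrow> AE \<omega> in M.
        real_cond_exp M (nat_filtration M X n)
          (indicator {\<omega> \<in> space M. X (n + 1) \<omega> = -1}) \<omega>
        = \<theta> * (real (cnt X (-1) n \<omega>) / real n * p + real (cnt X 1 n \<omega>) / real n * q)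
          + (1 - \<theta>) * q"
    and step_zero: "\<And>n. n \<ge> 1 \<Longrightarrow> AE \<omega> in M.
        real_cond_exp M (nat_filtration M X n)
          (indicator {\<omega> \<in> space M. X (n + 1) \<omega> = 0}) \<omega>
        = \<theta> * (p + q) * (real (cnt X 0 n \<omega>) / real n) + r"
  shows "(AE \<omega> in M. (\<lambda>n. (Zsum X n \<omega> - (\<integral>\<omega>. Zsum X n \<omega> \<partial>M)) / real n) \<longlonglongrightarrow> 0)
       \<and> (\<lambda>n. (\<integral>\<omega>. Zsum X n \<omega> \<partial>M) / real n)
            \<longlonglongrightarrow> ((1 - \<theta>) * (p + q)) / (1 - (p + q) * \<theta>)
       \<and> (AE \<omega> in M. (\<lambda>n. Zsum X n \<omega> / real n)
            \<longlonglongrightarrow> ((1 - \<theta>) * (p + q)) / (1 - (p + q) * \<theta>))"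
proof -
  \<comment> \<open>Z only sees whether a step moves.\<close>
  interpret W: elephant_walk M X p q r \<theta>
    using assms by (intro elephant_walk.intro elephant_walk_axioms.intro) auto
  have zlim_eq: "W.zlim = ((1 - \<theta>) * (p + q)) / (1 - (p + q) * \<theta>)"
    by (simp add: W.zlim_def W.\<tau>_def W.\<gamma>_def)
  note pathwise = W.AE_Zsum_ratio_tendsto and mean = W.expectation_Zsum_ratio_tendsto
  have "AE \<omega> in M. (\<lambda>n. (Zsum X n \<omega> - (\<integral>\<omega>. Zsum X n \<omega> \<partial>M)) / real n) \<longlonglongrightarrow> 0"
    using pathwise
  proof eventually_elim
    case (elim \<omega>)
    from tendsto_diff[OF elim mean] show ?case by (simp add: diff_divide_distrib)
  qed
  with pathwise mean show ?thesis unfolding zlim_eq by simp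
qed

end
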